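(* For every finite simple graph $G$, $\mathrm{SEDF}^0(G)\subseteq \mathrm{SEDF}(G)$.
   Context: For a simple graph $G$ and $f:E(G)\to\{1,-1\}$, write $f(v)=\sum_{e\in E_G(v)}f(e)$ for $v\in V(G)$, where $E_G(v)$ is the set of edges incident with $v$. $\mathrm{SEDF}(G)$ is the set of functions $f:E(G)\to\{1,-1\}$ with $\sum_{e'\in N[e]}f(e')\ge1$ for every edge $e=uv$, where $N[e]=E_G(u)\cup E_G(v)$. $\mathrm{SEDF}^0(G)$ is the set of functions $f:E(G)\to\{1,-1\}$ such that (a) $f(v)\ge 0$ for all $v\in V(G)$, and (b) $f(u)+f(v)\ge 2$ for every edge $e=uv$ with $f(e)=1$. *)

theory Defs
  imports Main
begin

definition simple_graph :: "'a set \<Rightarrow> 'a set set \<Rightarrow> bool" where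
  "simple_graph V E \<longleftrightarrow> finite V \<and> (\<forall>e\<in>E. e \<subseteq> V \<and> card e = 2)"

definition inc_edges :: "'a set set \<Rightarrow> 'a \<Rightarrow> 'a set set" where
  "inc_edges E v = {e\<in>E. v \<in> e}"

definition vsum :: "'a set set \<Rightarrow> ('a set \<Rightarrow> int) \<Rightarrow> 'a \<Rightarrow> int" where
  "vsum E f v = (\<Sum>e\<in>inc_edges E v. f e)"

text \<open>Functions E(G) -> {1,-1} (values outside E fixed to 0 so they are determined by E).\<close>
definition sign_funs :: "'a set set \<Rightarrow> ('a set \<Rightarrow> int) set" where
  "sign_funs E = {f. (\<forall>e\<in>E. f e = 1 \<or> f e = -1) \<and> (\<forall>e. e \<notin> E \<longrightarrow> f e = 0)}"

definition SEDF :: "'a set \<Rightarrow> 'a set set \<Rightarrow> ('a set \<Rightarrow> int) set" where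
  "SEDF V E = {f \<in> sign_funs E.
     \<forall>u v. {u, v} \<in> E \<longrightarrow> (\<Sum>e'\<in>inc_edges E u \<union> inc_edges E v. f e') \<ge> 1}"

definition SEDF0 :: "'a set \<Rightarrow> 'a set set \<Rightarrow> ('a set \<Rightarrow> int) set" where
  "SEDF0 V E = {f \<in> sign_funs E.
     (\<forall>v\<in>V. vsum E f v \<ge> 0) \<and>
     (\<forall>u v. {u, v} \<in> E \<longrightarrow> f {u, v} = 1 \<longrightarrow> vsum E f u + vsum E f v \<ge> 2)}"

end

theory Submission
  imports Defs
begin

text \<open>The closed neighbourhood of an edge \<open>uv\<close> counts \<open>uv\<close> itself twice in \<open>f(u) + f(v)\<close>, so its
  sum is \<open>f(u) + f(v) - f(uv)\<close>. If \<open>f(uv) = -1\<close> this is at least \<open>0 + 0 + 1\<close>; if \<open>f(uv) = 1\<close>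
  it is at least \<open>2 - 1\<close>.\<close>

lemma simple_graph_finite_edges:
  assumes "simple_graph V E"
  shows "finite E"
proof -
  have "E \<subseteq> Pow V" and "finite V" using assms by (auto simp: simple_graph_def)
  then show ?thesis by (meson finite_Pow_iff finite_subset)
qed

lemma simple_graph_edge_unique:
  assumes "simple_graph V E" and "e \<in> E" and "{u, v} \<in> E" and "u \<in> e" and "v \<in> e"
  shows "e = {u, v}"
proof -
  have "card e = 2" "card {u, v} = 2" using assms(1-3) by (auto simp: simple_graph_def)
  then have "finite e" by (simp add: card_ge_0_finite)
  moreover have "{u, v} \<subseteq> e" using assms(4,5) by blast
  ultimately show ?thesis using card_subset_eq \<open>card e = 2\<close> \<open>card {u, v} = 2\<close> by metis
qed

lemma inc_edges_Int_edge:
  assumes "simple_graph V E" and "{u, v} \<in> E"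
  shows "inc_edges E u \<inter> inc_edges E v = {{u, v}}"
proof
  show "inc_edges E u \<inter> inc_edges E v \<subseteq> {{u, v}}"
    using simple_graph_edge_unique[OF assms(1) _ assms(2)] by (auto simp: inc_edges_def)
  show "{{u, v}} \<subseteq> inc_edges E u \<inter> inc_edges E v"
    using assms(2) by (simp add: inc_edges_def)
qed

lemma sum_edge_neighbourhood:
  assumes "simple_graph V E" and "{u, v} \<in> E"
  shows "(\<Sum>e\<in>inc_edges E u \<union> inc_edges E v. f e) = vsum E f u + vsum E f v - f {u, v}"
proof -
  have "finite (inc_edges E w)" for w
    using simple_graph_finite_edges[OF assms(1)] by (simp add: inc_edges_def)
  then show ?thesis
    using sum_Un[of "inc_edges E u" "inc_edges E v" f] inc_edges_Int_edge[OF assms]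
    by (simp add: vsum_def)
qed

theorem lemma2p1:
  fixes V :: "'a set" and E :: "'a set set"
  assumes "simple_graph V E"
  shows "SEDF0 V E \<subseteq> SEDF V E"
proof
  fix f assume f: "f \<in> SEDF0 V E"
  have "(\<Sum>e\<in>inc_edges E u \<union> inc_edges E v. f e) \<ge> 1" if uv: "{u, v} \<in> E" for u v
  proof -
    have "u \<in> V" "v \<in> V" using assms uv by (auto simp: simple_graph_def)
    then have "vsum E f u \<ge> 0" "vsum E f v \<ge> 0"
      and "f {u, v} = 1 \<Longrightarrow> vsum E f u + vsum E f v \<ge> 2"
      and "f {u, v} = 1 \<or> f {u, v} = -1"
      using f uv by (auto simp: SEDF0_def sign_funs_def)
    then show ?thesis using sum_edge_neighbourhood[OF assms uv, of f] by linarith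
  qed
  then show "f \<in> SEDF V E" using f by (simp add: SEDF_def SEDF0_def)
qed

end
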